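(* Let $k\geq 2$ and let $L=(l_1,\dots,l_k)$ be positive integers with $l_1+\dots+l_k=n$ which are generic and reduced. Then the geometric realization of the generalized tonnetz $Tonn^{n,k}(L)$ is homeomorphic to the $(k-1)$-dimensional torus $T^{k-1}=(S^1)^{k-1}$, i.e. $Tonn^{n,k}(L)$ is a triangulation of $T^{k-1}$.
   Context: Elements of $[n]$ are identified with elements of $\mathbb{Z}_n$. $L=(l_1,\dots,l_k)$ is generic if for all subsets $I,J\subseteq[k]$, $\sum_{i\in I}l_i=\sum_{j\in J}l_j$ implies $I=J$. $L$ is reduced if $\gcd(l_1,\dots,l_k)=1$. The generalized tonnetz $Tonn^{n,k}(L)$ is the simplicial complex on vertex set $\mathbb{Z}_n$ whose maximal simplices are the sets $\Delta(x;\sigma)=\{x,\,x+l_{\sigma(1)},\,x+l_{\sigma(1)}+l_{\sigma(2)},\dots,x+l_{\sigma(1)}+\dots+l_{\sigma(k-1)}\}$ (sums in $\mathbb{Z}_n$), for $x\in\mathbb{Z}_n$ and $\sigma\in S_k$; its simplices are all subsets of these sets. *)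

theory Defs
  imports "HOL-Analysis.Analysis" "HOL-Combinatorics.Permutations"
begin

text \<open>Indices of L are 0..k-1 (L i is the paper's l_(i+1)); vertices of Z_n are 0..n-1.\<close>

definition generic :: "nat \<Rightarrow> (nat \<Rightarrow> nat) \<Rightarrow> bool" where
  "generic k L \<longleftrightarrow> (\<forall>I J. I \<subseteq> {..<k} \<longrightarrow> J \<subseteq> {..<k} \<longrightarrow>
      (\<Sum>i\<in>I. L i) = (\<Sum>j\<in>J. L j) \<longrightarrow> I = J)"

definition reduced :: "nat \<Rightarrow> (nat \<Rightarrow> nat) \<Rightarrow> bool" where
  "reduced k L \<longleftrightarrow> Gcd (L ` {..<k}) = 1"

definition tonnetz_simplex :: "nat \<Rightarrow> nat \<Rightarrow> (nat \<Rightarrow> nat) \<Rightarrow> nat \<Rightarrow> (nat \<Rightarrow> nat) \<Rightarrow> nat set" where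
  "tonnetz_simplex n k L x \<sigma> = {(x + (\<Sum>j<i. L (\<sigma> j))) mod n | i. i < k}"

definition tonnetz :: "nat \<Rightarrow> nat \<Rightarrow> (nat \<Rightarrow> nat) \<Rightarrow> nat set set" where
  "tonnetz n k L = {S. \<exists>x<n. \<exists>\<sigma>. \<sigma> permutes {..<k} \<and> S \<subseteq> tonnetz_simplex n k L x \<sigma>}"

text \<open>Geometric realization of a (finite) simplicial complex K with vertices in nat:
  barycentric-coordinate functions supported on a simplex, in the product (Euclidean) topology.\<close>
definition geometric_realization :: "nat set set \<Rightarrow> (nat \<Rightarrow> real) set" where
  "geometric_realization K = {f. \<exists>S\<in>K. finite S \<and> (\<forall>v. 0 \<le> f v) \<and> (\<forall>v. v \<notin> S \<longrightarrow> f v = 0)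
        \<and> (\<Sum>v\<in>S. f v) = 1}"

definition torus :: "nat \<Rightarrow> (nat \<Rightarrow> complex) set" where
  "torus m = {g. (\<forall>i<m. g i \<in> sphere 0 1) \<and> (\<forall>i\<ge>m. g i = 0)}"

end

theory Submission
  imports Defs
begin

text \<open>
  Each maximal simplex \<open>\<Delta>(x;\<sigma>)\<close> is mapped to the \<open>k\<close>-torus by lifting its vertices to the
  0/1-vectors of the initial segments \<open>{\<sigma>(1), \<dots>, \<sigma>(i)}\<close> in \<open>\<real>\<^sup>k\<close>, extending affinely,
  translating along the diagonal onto the hyperplane \<open>\<langle>L, y\<rangle> = -x\<close> and exponentiating.
  The image lies in the kernel of the character \<open>z \<mapsto> \<Prod> z\<^sub>m ^ l\<^sub>m\<close>. Genericity makes
  these maps agree on common faces; together they are injective, and every point of the kernel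
  is reached: sorting its angles gives \<open>\<sigma>\<close>, and their consecutive gaps are the barycentric weights.
  By compactness the realization is homeomorphic to the kernel. Since \<open>gcd L = 1\<close>, the
  kernel is carried by shears of the torus (Euclid's algorithm) onto the coordinate subtorus
  \<open>{z\<^sub>j = 1} \<cong> T\<^sup>k\<^sup>-\<^sup>1\<close>.
\<close>

lemma continuous_on_component [continuous_intros]:
  "continuous_on S (\<lambda>z. z i :: 'b::topological_space)"
  by (rule continuous_on_subset[OF continuous_on_product_coordinates]) simp

lemma exists_sorting_permutation:
  fixes \<theta> :: "nat \<Rightarrow> real"
  obtains \<sigma> where "\<sigma> permutes {..<k}" "\<And>a b. a \<le> b \<Longrightarrow> b < k \<Longrightarrow> \<theta> (\<sigma> b) \<le> \<theta> (\<sigma> a)"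
proof -
  define xs where "xs = sort_key (\<lambda>m. - \<theta> m) [0..<k]"
  have len: "length xs = k" and dist: "distinct xs" and set: "set xs = {..<k}"
    and sorted: "sorted (map (\<lambda>m. - \<theta> m) xs)"
    unfolding xs_def by (auto simp: length_sort distinct_sort set_sort sorted_sort_key)
  define \<sigma> where "\<sigma> i = (if i < k then xs ! i else i)" for i
  have "bij_betw ((!) xs) {..<k} {..<k}"
    using bij_betw_nth[OF dist] len set by simp
  then have "bij_betw \<sigma> {..<k} {..<k}"
    by (rule bij_betw_cong[THEN iffD1, rotated]) (simp add: \<sigma>_def)
  then have "\<sigma> permutes {..<k}"
    by (rule bij_imp_permutes) (simp add: \<sigma>_def)
  moreover have "\<theta> (\<sigma> b) \<le> \<theta> (\<sigma> a)" if "a \<le> b" "b < k" for a b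
    using sorted_nth_mono[OF sorted that(1)] that len by (simp add: \<sigma>_def)
  ultimately show ?thesis
    using that by blast
qed

lemma sum_greaterThanLessThan_telescope:
  fixes Q :: "nat \<Rightarrow> 'a::ab_group_add"
  assumes "p < k"
  shows "(\<Sum>i\<in>{p<..<k}. Q (i - 1) - Q i) = Q p - Q (k - 1)"
proof -
  have "{p<..<k} = {Suc p..k - 1}"
    using assms by auto
  then show ?thesis
    using sum_telescope''[of p "k - 1" "\<lambda>i. - Q i"] assms by simp
qed

lemma dvd_diff_bounded_cases:
  fixes a b n :: nat
  assumes "int n dvd int a - int b" "a \<le> n" "b \<le> n"
  shows "a = b \<or> a = n \<and> b = 0 \<or> a = 0 \<and> b = n"
proof -
  obtain c where c: "int a - int b = int n * c"
    using assms(1) by (elim dvdE)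
  consider "n = 0" | "c = 0" | "c = 1" | "c = -1"
  proof (cases "n = 0")
    case False
    have "\<bar>int n * c\<bar> \<le> int n"
      using c assms(2,3) by linarith
    then have "\<bar>c\<bar> \<le> 1"
      using False by (simp add: abs_mult mult_le_cancel_left1)
    then show ?thesis
      using that by linarith
  qed
  then show ?thesis
    using c assms(2,3) by cases auto
qed

lemma bezout_sum_Gcd:
  fixes L :: "nat \<Rightarrow> nat"
  obtains w where "(\<Sum>m<k. int (L m) * w m) = int (Gcd (L ` {..<k}))"
proof (induction k arbitrary: thesis)
  case 0
  then show ?case
    by simp
next
  case (Suc k)
  then obtain w where w: "(\<Sum>m<k. int (L m) * w m) = int (Gcd (L ` {..<k}))"
    by blast
  obtain u v where uv: "u * int (L k) + v * int (Gcd (L ` {..<k})) = gcd (int (L k)) (int (Gcd (L ` {..<k})))"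
    using bezout_int by blast
  have "(\<Sum>m<Suc k. int (L m) * (if m = k then u else v * w m))
      = u * int (L k) + v * (\<Sum>m<k. int (L m) * w m)"
    by (simp add: sum_distrib_left algebra_simps)
  also have "\<dots> = int (Gcd (L ` {..<Suc k}))"
    using uv w by (simp add: gcd_int_int_eq lessThan_Suc)
  finally show ?case
    by (rule Suc.prems)
qed

text \<open>A continuous bijection from a compact space onto a Hausdorff space is a homeomorphism,
  and continuity can be checked on a finite closed cover.\<close>
lemma homeomorphic_glued_cells:
  fixes C :: "'i \<Rightarrow> 'a::t2_space set" and \<phi> :: "'i \<Rightarrow> 'a \<Rightarrow> 'b::t2_space"
  assumes "finite P" and compact: "\<And>p. p \<in> P \<Longrightarrow> compact (C p)"
    and cont: "\<And>p. p \<in> P \<Longrightarrow> continuous_on (C p) (\<phi> p)"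
    and agree: "\<And>p q f. p \<in> P \<Longrightarrow> q \<in> P \<Longrightarrow> f \<in> C p \<Longrightarrow> f \<in> C q \<Longrightarrow> \<phi> p f = \<phi> q f"
    and inj: "\<And>p q f g. p \<in> P \<Longrightarrow> q \<in> P \<Longrightarrow> f \<in> C p \<Longrightarrow> g \<in> C q \<Longrightarrow> \<phi> p f = \<phi> q g \<Longrightarrow> f = g"
  shows "(\<Union>p\<in>P. C p) homeomorphic (\<Union>p\<in>P. \<phi> p ` C p)"
proof -
  define \<Phi> where "\<Phi> f = \<phi> (SOME p. p \<in> P \<and> f \<in> C p) f" for f
  have \<Phi>: "\<Phi> f = \<phi> p f" if "p \<in> P" "f \<in> C p" for p f
    using someI[of "\<lambda>p. p \<in> P \<and> f \<in> C p"] agree that unfolding \<Phi>_def by blast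
  have "continuous_on (\<Union>p\<in>P. C p) \<Phi>"
  proof (rule continuous_on_closed_Union[OF \<open>finite P\<close>])
    show "closed (C p)" if "p \<in> P" for p
      using compact[OF that] by (rule compact_imp_closed)
    show "continuous_on (C p) \<Phi>" if "p \<in> P" for p
      using cont[OF that] by (rule continuous_on_cong[THEN iffD1, rotated 2]) (use \<Phi> that in auto)
  qed
  moreover have "compact (\<Union>p\<in>P. C p)"
    using \<open>finite P\<close> compact by blast
  moreover have "\<Phi> ` (\<Union>p\<in>P. C p) = (\<Union>p\<in>P. \<phi> p ` C p)"
    using \<Phi> by force
  moreover have "inj_on \<Phi> (\<Union>p\<in>P. C p)"
    using \<Phi> inj by (intro inj_onI) (metis UN_E)
  ultimately show ?thesis
    unfolding homeomorphic_def by (blast intro: homeomorphism_compact)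
qed

lemma cis_2pi_eq_imp_diff_int:
  assumes "cis (2 * pi * a) = cis (2 * pi * b)"
  obtains z :: int where "a - b = of_int z"
proof -
  have "cis (2 * pi * (a - b)) = 1"
    using assms by (simp add: right_diff_distrib cis_divide[symmetric])
  then have "cos (2 * pi * (a - b)) = 1"
    by (metis cis.sel(1) one_complex.sel(1))
  then obtain z :: int where "2 * pi * (a - b) = of_int z * 2 * pi"
    using cos_one_2pi_int by blast
  then show ?thesis
    using that[of z] by simp
qed

lemma exists_angle:
  assumes "norm z = 1"
  obtains \<theta> where "0 \<le> \<theta>" "\<theta> < 1" "z = cis (2 * pi * \<theta>)"
proof -
  define \<theta> where "\<theta> = frac (Arg z / (2 * pi))"
  have "2 * pi * \<theta> = Arg z - 2 * pi * of_int \<lfloor>Arg z / (2 * pi)\<rfloor>"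
    unfolding \<theta>_def frac_def by (simp add: right_diff_distrib)
  then have "cis (2 * pi * \<theta>) = cis (Arg z) / cis (2 * pi * of_int \<lfloor>Arg z / (2 * pi)\<rfloor>)"
    by (simp only: cis_divide)
  also have "\<dots> = z"
  proof -
    have "z \<noteq> 0"
      using assms by auto
    then have "cis (Arg z) = z"
      using assms by (simp add: cis_Arg sgn_div_norm)
    then show ?thesis
      by simp
  qed
  finally have "z = cis (2 * pi * \<theta>)"
    by simp
  moreover have "0 \<le> \<theta>" "\<theta> < 1"
    unfolding \<theta>_def by (simp_all add: frac_lt_1)
  ultimately show ?thesis
    using that by blast
qed

section \<open>Kernels of characters of the torus\<close>

lemma torus_component_norm: "z \<in> torus k \<Longrightarrow> i < k \<Longrightarrow> norm (z i) = 1"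
  by (simp add: torus_def)

lemma torus_component_nonzero: "z \<in> torus k \<Longrightarrow> i < k \<Longrightarrow> z i \<noteq> 0"
  by (auto simp: torus_def)

lemma torus_slice_homeomorphic:
  assumes "j < k"
  shows "{z\<in>torus k. z j = 1} homeomorphic torus (k - 1)"
proof -
  define del_coord where "del_coord z i = z (if i < j then i else Suc i)" for z :: "nat \<Rightarrow> complex" and i
  define ins_coord where "ins_coord y i = (if i = j then 1 else y (if i < j then i else i - 1))"
    for y :: "nat \<Rightarrow> complex" and i
  have "homeomorphism {z\<in>torus k. z j = 1} (torus (k - 1)) del_coord ins_coord"
  proof (rule homeomorphismI)
    show "continuous_on {z\<in>torus k. z j = 1} del_coord"
      unfolding del_coord_def by (intro continuous_intros)
    show "continuous_on (torus (k - 1)) ins_coord"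
      unfolding ins_coord_def
    proof (intro continuous_on_coordinatewise_then_product)
      show "continuous_on (torus (k - 1)) (\<lambda>y. if i = j then 1 else y (if i < j then i else i - 1))" for i
        by (cases "i = j") (auto intro: continuous_intros)
    qed
    show "del_coord ` {z\<in>torus k. z j = 1} \<subseteq> torus (k - 1)"
      using assms by (auto simp: del_coord_def torus_def)
    show "ins_coord ` torus (k - 1) \<subseteq> {z\<in>torus k. z j = 1}"
      using assms by (auto simp: ins_coord_def torus_def)
    show "ins_coord (del_coord z) = z" if "z \<in> {z\<in>torus k. z j = 1}" for z
      using that by (auto simp: ins_coord_def del_coord_def fun_eq_iff)
    show "del_coord (ins_coord y) = y" for y
      by (auto simp: ins_coord_def del_coord_def fun_eq_iff)
  qed
  then show ?thesis
    unfolding homeomorphic_def by blast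
qed

definition character :: "nat \<Rightarrow> (nat \<Rightarrow> int) \<Rightarrow> (nat \<Rightarrow> complex) \<Rightarrow> complex" where
  "character k l z = (\<Prod>m<k. z m powi l m)"

definition character_kernel :: "nat \<Rightarrow> (nat \<Rightarrow> int) \<Rightarrow> (nat \<Rightarrow> complex) set" where
  "character_kernel k l = {z\<in>torus k. character k l z = 1}"

lemma character_cis:
  "character k l (\<lambda>m. cis (2 * pi * \<theta> m)) = cis (2 * pi * (\<Sum>m<k. of_int (l m) * \<theta> m))"
proof -
  have "character k l (\<lambda>m. cis (2 * pi * \<theta> m)) = (\<Prod>m<k. cis (of_int (l m) * (2 * pi * \<theta> m)))"
    unfolding character_def by (simp add: cis_power_int)
  also have "\<dots> = cis (\<Sum>m<k. of_int (l m) * (2 * pi * \<theta> m))"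
    by (induction k) (simp_all add: cis_mult)
  finally show ?thesis
    by (simp add: sum_distrib_left mult.left_commute)
qed

lemma character_kernel_angles:
  assumes z: "z \<in> character_kernel k l"
  obtains \<theta> N where "\<And>m. m < k \<Longrightarrow> 0 \<le> \<theta> m \<and> \<theta> m < 1 \<and> z m = cis (2 * pi * \<theta> m)"
    "(\<Sum>m<k. of_int (l m) * \<theta> m) = of_int N"
proof -
  have "\<forall>m. \<exists>\<theta>. m < k \<longrightarrow> 0 \<le> \<theta> \<and> \<theta> < 1 \<and> z m = cis (2 * pi * \<theta>)"
    using z exists_angle torus_component_norm by (metis character_kernel_def mem_Collect_eq)
  then obtain \<theta> where \<theta>: "\<And>m. m < k \<Longrightarrow> 0 \<le> \<theta> m \<and> \<theta> m < 1 \<and> z m = cis (2 * pi * \<theta> m)"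
    by metis
  have "character k l z = character k l (\<lambda>m. cis (2 * pi * \<theta> m))"
    unfolding character_def using \<theta> by (intro prod.cong refl) simp
  then have "cis (2 * pi * (\<Sum>m<k. of_int (l m) * \<theta> m)) = cis (2 * pi * 0)"
    using z by (simp add: character_kernel_def character_cis)
  then obtain N :: int where "(\<Sum>m<k. of_int (l m) * \<theta> m) = of_int N"
    by (rule cis_2pi_eq_imp_diff_int) simp
  with \<theta> show ?thesis
    using that by blast
qed

definition torus_shear :: "nat \<Rightarrow> nat \<Rightarrow> int \<Rightarrow> (nat \<Rightarrow> complex) \<Rightarrow> nat \<Rightarrow> complex" where
  "torus_shear i j c z = z(j := z j * z i powi c)"

lemma torus_shear_in_torus:
  assumes "z \<in> torus k" "i < k" "j < k" "i \<noteq> j"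
  shows "torus_shear i j c z \<in> torus k"
  using assms by (auto simp: torus_def torus_shear_def norm_mult norm_power_int)

lemma torus_shear_inverse:
  assumes "z \<in> torus k" "i < k" "j < k" "i \<noteq> j"
  shows "torus_shear i j (- c) (torus_shear i j c z) = z"
proof -
  have "z i powi c * z i powi (- c) = 1"
    using torus_component_nonzero[OF assms(1,2)] by (simp add: power_int_minus field_simps)
  then show ?thesis
    using assms by (auto simp: torus_shear_def fun_eq_iff mult.assoc)
qed

lemma continuous_on_torus_shear:
  assumes "i < k"
  shows "continuous_on (torus k) (torus_shear i j c)"
  unfolding torus_shear_def
proof (intro continuous_on_coordinatewise_then_product)
  show "continuous_on (torus k) (\<lambda>z. (z(j := z j * z i powi c)) m)" for m
    using assms
    by (cases "m = j") (auto intro!: continuous_intros continuous_on_power_int dest: torus_component_nonzero)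
qed

lemma character_torus_shear:
  assumes "z \<in> torus k" "i < k" "j < k" "i \<noteq> j"
  shows "character k l (torus_shear i j c z) = character k (l(i := l i + c * l j)) z"
proof -
  have nz: "z i \<noteq> 0"
    using torus_component_nonzero[OF assms(1,2)] .
  have "character k l (torus_shear i j c z)
      = (\<Prod>m<k. z m powi l m * (if m = j then z i powi (c * l j) else 1))"
    unfolding character_def torus_shear_def
    by (intro prod.cong refl)
       (simp add: power_int_mult_distrib power_int_mult[symmetric] mult.commute[of c])
  also have "\<dots> = character k l z * z i powi (c * l j)"
    using assms by (simp add: prod.distrib character_def)
  also have "\<dots> = (\<Prod>m<k. z m powi l m * (if m = i then z i powi (c * l j) else 1))"
    using assms by (simp add: prod.distrib character_def)
  also have "\<dots> = character k (l(i := l i + c * l j)) z"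
    unfolding character_def by (intro prod.cong refl) (simp add: power_int_add nz)
  finally show ?thesis .
qed

lemma character_kernel_shear_homeomorphic:
  assumes "i < k" "j < k" "i \<noteq> j"
  shows "character_kernel k (l(i := l i + c * l j)) homeomorphic character_kernel k l"
proof -
  let ?l' = "l(i := l i + c * l j)"
  have shear: "homeomorphism (torus k) (torus k) (torus_shear i j c) (torus_shear i j (- c))"
    using assms torus_shear_inverse[of _ k i j "- c"]
    by (intro homeomorphismI continuous_on_torus_shear)
       (auto simp: torus_shear_in_torus torus_shear_inverse)
  have "torus_shear i j c ` character_kernel k ?l' = character_kernel k l"
  proof (intro subset_antisym subsetI)
    show "y \<in> character_kernel k l" if "y \<in> torus_shear i j c ` character_kernel k ?l'" for y
      using that assms by (auto simp: character_kernel_def character_torus_shear torus_shear_in_torus)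
    show "y \<in> torus_shear i j c ` character_kernel k ?l'" if y: "y \<in> character_kernel k l" for y
    proof (rule image_eqI)
      have yt: "y \<in> torus k"
        using y by (simp add: character_kernel_def)
      have y': "torus_shear i j (- c) y \<in> torus k"
        using torus_shear_in_torus[OF yt assms] .
      show inv: "y = torus_shear i j c (torus_shear i j (- c) y)"
        using torus_shear_inverse[OF yt assms, of "- c"] by simp
      have "character k ?l' (torus_shear i j (- c) y) = character k l y"
        using character_torus_shear[OF y' assms, of l c] inv by simp
      then show "torus_shear i j (- c) y \<in> character_kernel k ?l'"
        using y y' by (simp add: character_kernel_def)
    qed
  qed
  then have "homeomorphism (character_kernel k ?l') (character_kernel k l)
      (torus_shear i j c) (torus_shear i j (- c))"
    by (intro homeomorphism_of_subsets[OF shear]) (auto simp: character_kernel_def)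
  then show ?thesis
    unfolding homeomorphic_def by blast
qed

lemma character_kernel_unit_vector:
  assumes "j < k" "\<And>m. m < k \<Longrightarrow> m \<noteq> j \<Longrightarrow> l m = 0" "l j = 1 \<or> l j = -1"
  shows "character_kernel k l = {z\<in>torus k. z j = 1}"
proof -
  have "character k l z = z j powi l j" for z
  proof -
    have "character k l z = (\<Prod>m<k. if m = j then z j powi l j else 1)"
      unfolding character_def by (rule prod.cong) (auto simp: assms(2))
    then show ?thesis
      using assms(1) by simp
  qed
  moreover have "z j powi l j = 1 \<longleftrightarrow> z j = 1" for z :: "nat \<Rightarrow> complex"
    using assms(3) by (auto simp: power_int_minus1_right)
  ultimately show ?thesis
    by (auto simp: character_kernel_def)
qed

lemma sum_nat_abs_update_less:
  fixes l :: "nat \<Rightarrow> int"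
  assumes "i < k" "\<bar>a\<bar> < \<bar>l i\<bar>"
  shows "(\<Sum>m<k. nat \<bar>(l(i := a)) m\<bar>) < (\<Sum>m<k. nat \<bar>l m\<bar>)"
  using assms by (intro sum_strict_mono_ex1) auto

lemma sum_mult_shear:
  fixes l w :: "nat \<Rightarrow> int"
  assumes "i < k" "j < k" "i \<noteq> j"
  shows "(\<Sum>m<k. (l(i := l i + c * l j)) m * (w(j := w j - c * w i)) m) = (\<Sum>m<k. l m * w m)"
proof -
  have "(\<Sum>m<k. (l(i := l i + c * l j)) m * (w(j := w j - c * w i)) m)
      = (\<Sum>m<k. l m * w m + (if m = i then c * l j * w i else 0) - (if m = j then c * l j * w i else 0))"
    using assms by (intro sum.cong refl) (auto simp: algebra_simps)
  also have "\<dots> = (\<Sum>m<k. l m * w m)"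
    using assms by (simp add: sum.distrib sum_subtractf)
  finally show ?thesis .
qed

text \<open>Euclid's algorithm by elementary column operations: each shear is an automorphism of the
  torus, and a unimodular row vector can be sheared down to a signed unit vector.\<close>
lemma character_kernel_homeomorphic_torus:
  assumes "(\<Sum>m<k. l m * w m) = 1"
  shows "character_kernel k l homeomorphic torus (k - 1)"
  using assms
proof (induction "\<Sum>m<k. nat \<bar>l m\<bar>" arbitrary: l w rule: less_induct)
  case less
  show ?case
  proof (cases "\<exists>i j. i < k \<and> j < k \<and> i \<noteq> j \<and> l i \<noteq> 0 \<and> l j \<noteq> 0 \<and> \<bar>l j\<bar> \<le> \<bar>l i\<bar>")
    case True
    then obtain i j where ij: "i < k" "j < k" "i \<noteq> j" "l i \<noteq> 0" "l j \<noteq> 0" "\<bar>l j\<bar> \<le> \<bar>l i\<bar>"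
      by blast
    define c where "c = - (sgn (l i) * sgn (l j))"
    have "\<bar>l i + c * l j\<bar> < \<bar>l i\<bar>"
      using ij unfolding c_def by (cases "l i > 0"; cases "l j > 0") (auto simp: sgn_if)
    then have "character_kernel k (l(i := l i + c * l j)) homeomorphic torus (k - 1)"
      using ij sum_mult_shear[OF ij(1-3), of l c w] less
      by (intro less.hyps[of _ "w(j := w j - c * w i)"] sum_nat_abs_update_less) auto
    then show ?thesis
      using character_kernel_shear_homeomorphic[OF ij(1-3)] homeomorphic_sym homeomorphic_trans
      by blast
  next
    case False
    obtain j where j: "j < k" "l j \<noteq> 0"
      using less.prems by (metis (no_types, lifting) mult_eq_0_iff sum.neutral lessThan_iff zero_neq_one)
    have others: "l m = 0" if "m < k" "m \<noteq> j" for m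
      using False j that by (metis linorder_le_cases)
    have "(\<Sum>m<k. l m * w m) = l j * w j"
      using j others by (subst sum.remove[of _ j]) (auto intro!: sum.neutral)
    then have "l j = 1 \<or> l j = -1"
      using less.prems zmult_eq_1_iff by auto
    then show ?thesis
      using character_kernel_unit_vector[OF j(1) others] torus_slice_homeomorphic[OF j(1)] by simp
  qed
qed

definition spread :: "nat \<Rightarrow> (nat \<Rightarrow> real) \<Rightarrow> real" where
  "spread k y = Max ((\<lambda>(a, b). y a - y b) ` ({..<k} \<times> {..<k}))"

lemma spread_ge: "a < k \<Longrightarrow> b < k \<Longrightarrow> y a - y b \<le> spread k y"
  unfolding spread_def by (rule Max_ge) force+

lemma spread_le: "0 < k \<Longrightarrow> (\<And>a b. a < k \<Longrightarrow> b < k \<Longrightarrow> y a - y b \<le> v) \<Longrightarrow> spread k y \<le> v"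
  unfolding spread_def by (subst Max_le_iff) force+

lemma spread_eqI:
  "a < k \<Longrightarrow> b < k \<Longrightarrow> y a - y b = v \<Longrightarrow> (\<And>a b. a < k \<Longrightarrow> b < k \<Longrightarrow> y a - y b \<le> v)
    \<Longrightarrow> spread k y = v"
  using spread_ge[of a k b y] spread_le[of k y v] by fastforce

lemma spread_cong: "(\<And>p. p < k \<Longrightarrow> y p = y' p) \<Longrightarrow> spread k y = spread k y'"
  unfolding spread_def by (intro arg_cong[where f = Max] image_cong) auto

lemma spread_add_const: "spread k (\<lambda>m. y m + c) = spread k y"
  unfolding spread_def by (simp add: case_prod_beta)

lemma spread_permute:
  assumes "\<sigma> permutes {..<k}"
  shows "spread k (\<lambda>p. y (\<sigma> p)) = spread k y"
proof -
  have "map_prod \<sigma> \<sigma> ` ({..<k} \<times> {..<k}) = {..<k} \<times> {..<k}"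
    using permutes_image[OF assms] by (simp add: map_prod_surj_on)
  moreover have "(\<lambda>(a, b). y (\<sigma> a) - y (\<sigma> b)) ` ({..<k} \<times> {..<k})
      = (\<lambda>(a, b). y a - y b) ` (map_prod \<sigma> \<sigma> ` ({..<k} \<times> {..<k}))"
    by (simp add: image_image case_prod_beta)
  ultimately show ?thesis
    unfolding spread_def by simp
qed

text \<open>\<open>tail_sum t k p\<close> is coordinate \<open>\<sigma> p\<close> of the lift of the point of \<open>\<Delta>(x;\<sigma>)\<close> with weights
  \<open>t\<close> (lemma \<open>lift_permute\<close>). Its spread against an integer vector is below one exactly
  near the lifts of the vertices, where it is one minus the vertex weight.\<close>
definition tail_sum :: "(nat \<Rightarrow> real) \<Rightarrow> nat \<Rightarrow> nat \<Rightarrow> real" where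
  "tail_sum t k p = (\<Sum>i\<in>{p<..<k}. t i)"

locale barycentric_weights =
  fixes t :: "nat \<Rightarrow> real" and k :: nat
  assumes nonneg: "\<And>i. 0 \<le> t i" and sum_eq_1: "(\<Sum>i<k. t i) = 1"
begin

lemma k_pos: "0 < k"
  using sum_eq_1 by (cases k) auto

lemma sum_le_1: "A \<subseteq> {..<k} \<Longrightarrow> sum t A \<le> 1"
  using sum_mono2[of "{..<k}" A t] nonneg sum_eq_1 by auto

lemma weight_le_1: "t j \<le> 1" if "j < k"
  using sum_le_1[of "{j}"] that by simp

lemma sum_le_1_minus: "A \<subseteq> {..<k} \<Longrightarrow> j < k \<Longrightarrow> j \<notin> A \<Longrightarrow> sum t A \<le> 1 - t j"
  using sum_le_1[of "insert j A"] finite_subset[of A "{..<k}"] by auto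

lemma tail_sum_diff: "a \<le> b \<Longrightarrow> b < k \<Longrightarrow> tail_sum t k a - tail_sum t k b = sum t {a<..b}"
proof -
  assume "a \<le> b" "b < k"
  then have "{a<..<k} = {a<..b} \<union> {b<..<k}"
    by auto
  then show ?thesis
    unfolding tail_sum_def by (simp add: sum.union_disjoint ivl_disj_int)
qed

lemma tail_sum_antimono: "a \<le> b \<Longrightarrow> b < k \<Longrightarrow> tail_sum t k b \<le> tail_sum t k a"
  using tail_sum_diff[of a b] sum_nonneg[of "{a<..b}" t] nonneg by force

lemma tail_sum_bounds: "0 \<le> tail_sum t k p" "tail_sum t k p \<le> 1"
  unfolding tail_sum_def using nonneg by (auto intro: sum_nonneg sum_le_1)

lemma tail_sum_first: "tail_sum t k 0 = 1 - t 0"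
proof -
  have "{..<k} = insert 0 {0<..<k}"
    using k_pos by auto
  then show ?thesis
    using sum_eq_1 unfolding tail_sum_def by simp
qed

lemma tail_sum_last: "tail_sum t k (k - 1) = 0"
proof -
  have "{k - 1<..<k} = {}"
    by auto
  then show ?thesis
    unfolding tail_sum_def by simp
qed

lemma tail_sum_step_diff_le:
  assumes "j < k" "a < k" "b < k"
  shows "(tail_sum t k a - of_bool (a < j)) - (tail_sum t k b - of_bool (b < j)) \<le> 1 - t j"
proof (cases "a \<le> b")
  case True
  have "sum t {a<..b} \<le> 1 - t j" if "\<not> (a < j \<and> \<not> b < j)"
    using that assms True by (intro sum_le_1_minus) auto
  moreover have "sum t {a<..b} \<le> 1"
    using assms by (intro sum_le_1) auto
  ultimately show ?thesis
    using tail_sum_diff[OF True assms(3)] weight_le_1[OF assms(1)] True by auto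
next
  case False
  have "t j \<le> sum t {b<..a}" if "b < j" "\<not> a < j"
    using that nonneg by (intro member_le_sum) auto
  moreover have "0 \<le> sum t {b<..a}"
    using nonneg by (simp add: sum_nonneg)
  ultimately show ?thesis
    using tail_sum_diff[of b a] weight_le_1[OF assms(1)] assms False by auto
qed

lemma spread_tail_sum_step:
  assumes "j < k"
  shows "spread k (\<lambda>p. tail_sum t k p - of_bool (p < j)) = 1 - t j"
proof (cases "j = 0")
  case True
  then show ?thesis
    using k_pos tail_sum_first tail_sum_last tail_sum_step_diff_le[OF assms]
    by (intro spread_eqI[of 0 k "k - 1"]) auto
next
  case False
  have "{j - 1<..j} = {j}"
    using False by auto
  then have "tail_sum t k (j - 1) - tail_sum t k j = t j"
    using tail_sum_diff[of "j - 1" j] assms by simp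
  then show ?thesis
    using assms False tail_sum_step_diff_le[OF assms]
    by (intro spread_eqI[of j k "j - 1"]) auto
qed

lemma step_if_spread_tail_sum_lt_1:
  assumes "spread k (\<lambda>p. tail_sum t k p - of_int (\<beta> p)) < 1"
  shows "\<exists>j<k. \<exists>r. \<forall>p<k. \<beta> p = of_bool (p < j) + r"
proof -
  let ?y = "\<lambda>p. tail_sum t k p - of_int (\<beta> p)"
  have step: "\<beta> b \<le> \<beta> a \<and> \<beta> a \<le> \<beta> b + 1" if "a \<le> b" "b < k" for a b
  proof -
    have "?y a - ?y b < 1" "?y b - ?y a < 1"
      using spread_ge[of a k b ?y] spread_ge[of b k a ?y] assms that by auto
    moreover have "0 \<le> tail_sum t k a - tail_sum t k b" "tail_sum t k a - tail_sum t k b \<le> 1"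
      using tail_sum_antimono[OF that] tail_sum_bounds[of a] tail_sum_bounds[of b] by auto
    ultimately have "real_of_int (\<beta> a - \<beta> b) > -1" "real_of_int (\<beta> a - \<beta> b) < 2"
      by auto
    then show ?thesis
      by linarith
  qed
  define r where "r = \<beta> (k - 1)"
  have ex: "\<exists>p. p < k \<and> \<beta> p = r"
    using k_pos r_def by (intro exI[of _ "k - 1"]) auto
  define j where "j = (LEAST p. p < k \<and> \<beta> p = r)"
  have j: "j < k" "\<beta> j = r"
    using LeastI_ex[OF ex] unfolding j_def by auto
  have below: "\<beta> p = r + 1" if "p < j" for p
  proof -
    have "\<beta> p \<noteq> r"
      using not_less_Least[OF that[unfolded j_def]] that j by auto
    moreover have "p \<le> k - 1" "k - 1 < k"
      using that j by auto
    ultimately show ?thesis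
      using step[of p "k - 1"] unfolding r_def by linarith
  qed
  have above: "\<beta> p = r" if "j \<le> p" "p < k" for p
    using step[OF that] step[of p "k - 1"] that j unfolding r_def by auto
  have "\<beta> p = of_bool (p < j) + r" if "p < k" for p
    using below above that by (cases "p < j") auto
  then show ?thesis
    using j(1) by blast
qed

end

section \<open>Cells of the tonnetz and their maps to the torus\<close>

definition prefix_sum :: "(nat \<Rightarrow> nat) \<Rightarrow> (nat \<Rightarrow> nat) \<Rightarrow> nat \<Rightarrow> nat" where
  "prefix_sum L \<sigma> i = (\<Sum>j<i. L (\<sigma> j))"

definition vertex :: "nat \<Rightarrow> (nat \<Rightarrow> nat) \<Rightarrow> nat \<Rightarrow> (nat \<Rightarrow> nat) \<Rightarrow> nat \<Rightarrow> nat" where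
  "vertex n L x \<sigma> i = (x + prefix_sum L \<sigma> i) mod n"

definition prefix_indicator :: "(nat \<Rightarrow> nat) \<Rightarrow> nat \<Rightarrow> nat \<Rightarrow> int" where
  "prefix_indicator \<sigma> i m = of_bool (m \<in> \<sigma> ` {..<i})"

definition vertex_index :: "nat \<Rightarrow> nat \<Rightarrow> (nat \<Rightarrow> nat) \<Rightarrow> nat \<Rightarrow> (nat \<Rightarrow> nat) \<Rightarrow> nat \<Rightarrow> nat" where
  "vertex_index n k L x \<sigma> = inv_into {..<k} (vertex n L x \<sigma>)"

definition realized_simplex ::
    "nat \<Rightarrow> nat \<Rightarrow> (nat \<Rightarrow> nat) \<Rightarrow> nat \<Rightarrow> (nat \<Rightarrow> nat) \<Rightarrow> (nat \<Rightarrow> real) set" where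
  "realized_simplex n k L x \<sigma> = {f. (\<forall>v. 0 \<le> f v) \<and> (\<forall>v. v \<notin> tonnetz_simplex n k L x \<sigma> \<longrightarrow> f v = 0)
      \<and> sum f (tonnetz_simplex n k L x \<sigma>) = 1}"

lemma finite_tonnetz_simplex: "finite (tonnetz_simplex n k L x \<sigma>)"
  by (simp add: tonnetz_simplex_def)

lemma closed_realized_simplex: "closed (realized_simplex n k L x \<sigma>)"
proof -
  let ?S = "tonnetz_simplex n k L x \<sigma>"
  have "realized_simplex n k L x \<sigma>
      = (\<Inter>v. {f. 0 \<le> f v}) \<inter> (\<Inter>v\<in>- ?S. {f. f v = 0}) \<inter> {f. sum f ?S = 1}"
    unfolding realized_simplex_def by auto
  moreover have "closed (\<Inter>v. {f :: nat \<Rightarrow> real. 0 \<le> f v})" "closed (\<Inter>v\<in>- ?S. {f :: nat \<Rightarrow> real. f v = 0})"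
    "closed {f :: nat \<Rightarrow> real. sum f ?S = 1}"
    by (intro closed_INT ballI closed_Collect_le closed_Collect_eq continuous_intros)+
  ultimately show ?thesis
    by (metis closed_Int)
qed

lemma compact_realized_simplex: "compact (realized_simplex n k L x \<sigma>)"
proof -
  let ?S = "tonnetz_simplex n k L x \<sigma>"
  let ?box = "PiE UNIV (\<lambda>_ :: nat. {0..1 :: real})"
  have "compactin (product_topology (\<lambda>_. euclidean) UNIV) ?box"
    by (simp add: compactin_PiE)
  then have "compact ?box"
    by (simp add: euclidean_product_topology compactin_euclidean_iff)
  moreover have "f v \<in> {0..1}" if "f \<in> realized_simplex n k L x \<sigma>" for f v
    using that member_le_sum[of v ?S f] finite_tonnetz_simplex
    by (cases "v \<in> ?S") (auto simp: realized_simplex_def)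
  then have "realized_simplex n k L x \<sigma> = ?box \<inter> realized_simplex n k L x \<sigma>"
    by auto
  ultimately show ?thesis
    using compact_Int_closed[OF _ closed_realized_simplex] by metis
qed

lemma geometric_realization_tonnetz:
  "geometric_realization (tonnetz n k L)
    = (\<Union>(x, \<sigma>)\<in>{..<n} \<times> {\<sigma>. \<sigma> permutes {..<k}}. realized_simplex n k L x \<sigma>)"
proof (intro subset_antisym subsetI)
  fix f
  assume "f \<in> geometric_realization (tonnetz n k L)"
  then obtain S where S: "S \<in> tonnetz n k L" "finite S" "\<forall>v. 0 \<le> f v" "\<forall>v. v \<notin> S \<longrightarrow> f v = 0"
    "sum f S = 1"
    unfolding geometric_realization_def by blast
  then obtain x \<sigma> where x\<sigma>: "x < n" "\<sigma> permutes {..<k}" "S \<subseteq> tonnetz_simplex n k L x \<sigma>"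
    unfolding tonnetz_def by blast
  have "sum f (tonnetz_simplex n k L x \<sigma>) = sum f S"
    using S x\<sigma>(3) finite_tonnetz_simplex by (intro sum.mono_neutral_right) auto
  then have "f \<in> realized_simplex n k L x \<sigma>"
    using S x\<sigma>(3) unfolding realized_simplex_def by auto
  then show "f \<in> (\<Union>(x, \<sigma>)\<in>{..<n} \<times> {\<sigma>. \<sigma> permutes {..<k}}. realized_simplex n k L x \<sigma>)"
    using x\<sigma> by blast
next
  fix f
  assume "f \<in> (\<Union>(x, \<sigma>)\<in>{..<n} \<times> {\<sigma>. \<sigma> permutes {..<k}}. realized_simplex n k L x \<sigma>)"
  then obtain x \<sigma> where "x < n" "\<sigma> permutes {..<k}" and f: "f \<in> realized_simplex n k L x \<sigma>"
    by blast
  then have "tonnetz_simplex n k L x \<sigma> \<in> tonnetz n k L"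
    unfolding tonnetz_def by blast
  then show "f \<in> geometric_realization (tonnetz n k L)"
    using f finite_tonnetz_simplex[of n k L x \<sigma>] unfolding geometric_realization_def
    by (intro CollectI bexI[of _ "tonnetz_simplex n k L x \<sigma>"]) (simp_all add: realized_simplex_def)
qed

text \<open>Vertex \<open>i\<close> of \<open>\<Delta>(x;\<sigma>)\<close> is lifted to the 0/1-vector of \<open>\<sigma>{..<i}\<close>; \<open>normalized_lift\<close>
  moves the lifted point along the diagonal onto the hyperplane \<open>\<langle>L, y\<rangle> = -x\<close>.\<close>
definition lift ::
    "nat \<Rightarrow> nat \<Rightarrow> (nat \<Rightarrow> nat) \<Rightarrow> nat \<Rightarrow> (nat \<Rightarrow> nat) \<Rightarrow> (nat \<Rightarrow> real) \<Rightarrow> nat \<Rightarrow> real" where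
  "lift n k L x \<sigma> f m = (\<Sum>i<k. f (vertex n L x \<sigma> i) * of_int (prefix_indicator \<sigma> i m))"

definition normalized_lift ::
    "nat \<Rightarrow> nat \<Rightarrow> (nat \<Rightarrow> nat) \<Rightarrow> nat \<Rightarrow> (nat \<Rightarrow> nat) \<Rightarrow> (nat \<Rightarrow> real) \<Rightarrow> nat \<Rightarrow> real" where
  "normalized_lift n k L x \<sigma> f m =
     lift n k L x \<sigma> f m - ((\<Sum>m'<k. real (L m') * lift n k L x \<sigma> f m') + real x) / real n"

definition torus_map ::
    "nat \<Rightarrow> nat \<Rightarrow> (nat \<Rightarrow> nat) \<Rightarrow> nat \<Rightarrow> (nat \<Rightarrow> nat) \<Rightarrow> (nat \<Rightarrow> real) \<Rightarrow> nat \<Rightarrow> complex" where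
  "torus_map n k L x \<sigma> f = (\<lambda>m. if m < k then cis (2 * pi * normalized_lift n k L x \<sigma> f m) else 0)"

locale generic_tonnetz =
  fixes n k :: nat and L :: "nat \<Rightarrow> nat"
  assumes k_pos: "0 < k" and L_pos: "\<And>i. i < k \<Longrightarrow> 0 < L i" and sum_L: "(\<Sum>i<k. L i) = n"
    and generic: "generic k L"
begin

lemma n_pos: "0 < n"
  using member_le_sum[of 0 "{..<k}" L] L_pos[of 0] k_pos sum_L by simp

lemma sum_L_real: "(\<Sum>m<k. real (L m)) = real n"
  using sum_L by (metis of_nat_sum)

lemma prefix_sum_split: "i \<le> j \<Longrightarrow> prefix_sum L \<sigma> j = prefix_sum L \<sigma> i + (\<Sum>p\<in>{i..<j}. L (\<sigma> p))"
  unfolding prefix_sum_def lessThan_atLeast0 by (simp add: sum.atLeastLessThan_concat)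

lemma prefix_sum_image:
  assumes "\<sigma> permutes {..<k}"
  shows "prefix_sum L \<sigma> i = sum L (\<sigma> ` {..<i})"
  using permutes_inj_on[OF assms] by (simp add: prefix_sum_def sum.reindex)

lemma prefix_sum_k:
  assumes "\<sigma> permutes {..<k}"
  shows "prefix_sum L \<sigma> k = n"
  using prefix_sum_image[OF assms] permutes_image[OF assms] sum_L by simp

lemma sum_segment_pos:
  assumes "\<sigma> permutes {..<k}" "i < j" "j \<le> k"
  shows "0 < (\<Sum>p\<in>{i..<j}. L (\<sigma> p))"
  using member_le_sum[of i "{i..<j}" "L \<circ> \<sigma>"] L_pos[of "\<sigma> i"] permutes_in_image[OF assms(1)] assms
  by simp

lemma prefix_sum_less:
  assumes "\<sigma> permutes {..<k}" "i < k"
  shows "prefix_sum L \<sigma> i < n"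
  using prefix_sum_split[of i k \<sigma>] sum_segment_pos[OF assms(1,2)] prefix_sum_k[OF assms(1)] assms
  by simp

lemma inj_on_vertex:
  assumes "\<sigma> permutes {..<k}"
  shows "inj_on (vertex n L x \<sigma>) {..<k}"
proof -
  have neq: "vertex n L x \<sigma> i \<noteq> vertex n L x \<sigma> j" if "i < j" "j < k" for i j
  proof
    let ?d = "\<Sum>p\<in>{i..<j}. L (\<sigma> p)"
    assume eq: "vertex n L x \<sigma> i = vertex n L x \<sigma> j"
    have "(x + prefix_sum L \<sigma> i + ?d) mod n = vertex n L x \<sigma> j"
      using prefix_sum_split[of i j \<sigma>] that(1) unfolding vertex_def by (simp add: add.assoc)
    then have "(x + prefix_sum L \<sigma> i + ?d) mod n = (x + prefix_sum L \<sigma> i) mod n"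
      using eq unfolding vertex_def by linarith
    then have "n dvd ?d"
      using mod_eq_dvd_iff_nat[of "x + prefix_sum L \<sigma> i" "x + prefix_sum L \<sigma> i + ?d" n] by simp
    moreover have "0 < ?d" "?d < n"
      using sum_segment_pos[OF assms that(1)] prefix_sum_split[of i j \<sigma>]
        prefix_sum_less[OF assms that(2)] that by auto
    ultimately show False
      using nat_dvd_not_less by blast
  qed
  show ?thesis
  proof (rule inj_onI)
    fix i j
    assume "i \<in> {..<k}" "j \<in> {..<k}" "vertex n L x \<sigma> i = vertex n L x \<sigma> j"
    then show "i = j"
      using neq[of i j] neq[of j i] by (cases i j rule: linorder_cases) auto
  qed
qed

lemma vertex_eq_iff_dvd:
  "vertex n L x \<sigma> j = vertex n L x' \<sigma>' j'
    \<longleftrightarrow> int n dvd (int x + int (prefix_sum L \<sigma> j)) - (int x' + int (prefix_sum L \<sigma>' j'))"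
proof -
  have "vertex n L x \<sigma> j = vertex n L x' \<sigma>' j' \<longleftrightarrow> int (vertex n L x \<sigma> j) = int (vertex n L x' \<sigma>' j')"
    by (simp only: of_nat_eq_iff)
  also have "\<dots> \<longleftrightarrow> (int x + int (prefix_sum L \<sigma> j)) mod int n = (int x' + int (prefix_sum L \<sigma>' j')) mod int n"
    by (simp add: vertex_def zmod_int)
  finally show ?thesis
    by (simp only: mod_eq_dvd_iff)
qed

lemma tonnetz_simplex_eq: "tonnetz_simplex n k L x \<sigma> = vertex n L x \<sigma> ` {..<k}"
  unfolding tonnetz_simplex_def vertex_def prefix_sum_def by auto

lemma sum_vertex_weights:
  assumes "\<sigma> permutes {..<k}" "f \<in> realized_simplex n k L x \<sigma>"
  shows "(\<Sum>i<k. f (vertex n L x \<sigma> i)) = 1"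
  using assms(2) sum.reindex[OF inj_on_vertex[OF assms(1)], of f]
  by (simp add: realized_simplex_def tonnetz_simplex_eq)

lemma barycentric_weights_vertex:
  assumes "\<sigma> permutes {..<k}" "f \<in> realized_simplex n k L x \<sigma>"
  shows "barycentric_weights (\<lambda>i. f (vertex n L x \<sigma> i)) k"
  using assms sum_vertex_weights by unfold_locales (auto simp: realized_simplex_def)

lemma prefix_indicator_permute:
  assumes "\<sigma> permutes {..<k}"
  shows "prefix_indicator \<sigma> i (\<sigma> p) = of_bool (p < i)"
  using permutes_inj[OF assms] by (auto simp: prefix_indicator_def inj_eq)

lemma sum_L_prefix_indicator:
  assumes "\<sigma> permutes {..<k}" "i \<le> k"
  shows "(\<Sum>m<k. int (L m) * prefix_indicator \<sigma> i m) = int (prefix_sum L \<sigma> i)"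
proof -
  have "(\<Sum>m<k. int (L m) * prefix_indicator \<sigma> i m) = (\<Sum>m<k. if m \<in> \<sigma> ` {..<i} then int (L m) else 0)"
    unfolding prefix_indicator_def by (intro sum.cong refl) simp
  also have "\<dots> = (\<Sum>m\<in>{..<k} \<inter> \<sigma> ` {..<i}. int (L m))"
    by (rule sum.inter_restrict[symmetric]) simp
  also have "{..<k} \<inter> \<sigma> ` {..<i} = \<sigma> ` {..<i}"
    using image_mono[of "{..<i}" "{..<k}" \<sigma>] permutes_image[OF assms(1)] assms(2)
    by (intro Int_absorb1) simp
  finally show ?thesis
    by (simp add: prefix_sum_image[OF assms(1)])
qed

lemma lift_permute:
  assumes "\<sigma> permutes {..<k}" "p < k"
  shows "lift n k L x \<sigma> f (\<sigma> p) = tail_sum (\<lambda>i. f (vertex n L x \<sigma> i)) k p"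
proof -
  have "lift n k L x \<sigma> f (\<sigma> p) = (\<Sum>i<k. if i \<in> {p<..<k} then f (vertex n L x \<sigma> i) else 0)"
    unfolding lift_def by (intro sum.cong refl) (simp add: prefix_indicator_permute[OF assms(1)])
  also have "\<dots> = (\<Sum>i\<in>{..<k} \<inter> {p<..<k}. f (vertex n L x \<sigma> i))"
    by (rule sum.inter_restrict[symmetric]) simp
  also have "{..<k} \<inter> {p<..<k} = {p<..<k}"
    by auto
  finally show ?thesis
    unfolding tail_sum_def .
qed

lemma sum_L_normalized_lift: "(\<Sum>m<k. real (L m) * normalized_lift n k L x \<sigma> f m) = - real x"
proof -
  define c where "c = ((\<Sum>m<k. real (L m) * lift n k L x \<sigma> f m) + real x) / real n"
  have "(\<Sum>m<k. real (L m) * normalized_lift n k L x \<sigma> f m)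
      = (\<Sum>m<k. real (L m) * lift n k L x \<sigma> f m) - (\<Sum>m<k. real (L m)) * c"
    unfolding normalized_lift_def c_def[symmetric] by (simp add: right_diff_distrib sum_subtractf sum_distrib_right)
  then show ?thesis
    using n_pos by (simp add: sum_L_real c_def)
qed

lemma torus_map_in_kernel: "torus_map n k L x \<sigma> f \<in> character_kernel k (\<lambda>m. int (L m))"
proof -
  have "character k (\<lambda>m. int (L m)) (torus_map n k L x \<sigma> f)
      = character k (\<lambda>m. int (L m)) (\<lambda>m. cis (2 * pi * normalized_lift n k L x \<sigma> f m))"
    unfolding character_def torus_map_def by simp
  also have "\<dots> = 1"
    using character_cis sum_L_normalized_lift cis_multiple_2pi[of "- real x"] by simp
  finally show ?thesis
    by (simp add: character_kernel_def torus_def torus_map_def)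
qed

lemma continuous_on_torus_map: "continuous_on S (torus_map n k L x \<sigma>)"
  unfolding torus_map_def
proof (intro continuous_on_coordinatewise_then_product)
  fix m
  have "continuous_on S (\<lambda>f. lift n k L x \<sigma> f m')" for m'
    unfolding lift_def by (intro continuous_intros)
  then have "continuous_on S (\<lambda>f. normalized_lift n k L x \<sigma> f m)"
    unfolding normalized_lift_def by (intro continuous_intros) (use n_pos in auto)
  then show "continuous_on S (\<lambda>f. if m < k then cis (2 * pi * normalized_lift n k L x \<sigma> f m) else 0)"
    by (cases "m < k") (auto intro!: continuous_on_cis continuous_intros)
qed

subsection \<open>Injectivity\<close>

lemma spread_lift_vertex:
  assumes "\<sigma> permutes {..<k}" "f \<in> realized_simplex n k L x \<sigma>" "j < k"
  shows "spread k (\<lambda>m. lift n k L x \<sigma> f m - of_int (prefix_indicator \<sigma> j m)) = 1 - f (vertex n L x \<sigma> j)"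
proof -
  interpret w: barycentric_weights "\<lambda>i. f (vertex n L x \<sigma> i)" k
    using barycentric_weights_vertex[OF assms(1,2)] .
  have "spread k (\<lambda>m. lift n k L x \<sigma> f m - of_int (prefix_indicator \<sigma> j m))
      = spread k (\<lambda>p. lift n k L x \<sigma> f (\<sigma> p) - of_int (prefix_indicator \<sigma> j (\<sigma> p)))"
    by (rule spread_permute[OF assms(1), symmetric])
  also have "\<dots> = spread k (\<lambda>p. tail_sum (\<lambda>i. f (vertex n L x \<sigma> i)) k p - of_bool (p < j))"
    by (rule spread_cong) (simp add: lift_permute[OF assms(1)] prefix_indicator_permute[OF assms(1)])
  also have "\<dots> = 1 - f (vertex n L x \<sigma> j)"
    by (rule w.spread_tail_sum_step[OF assms(3)])
  finally show ?thesis .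
qed

lemma vertex_if_spread_lift_lt_1:
  assumes "\<sigma> permutes {..<k}" "f \<in> realized_simplex n k L x \<sigma>"
    and "spread k (\<lambda>m. lift n k L x \<sigma> f m - of_int (b m)) < 1"
  obtains j r where "j < k" "\<And>m. m < k \<Longrightarrow> b m = prefix_indicator \<sigma> j m + r"
proof -
  interpret w: barycentric_weights "\<lambda>i. f (vertex n L x \<sigma> i)" k
    using barycentric_weights_vertex[OF assms(1,2)] .
  have "spread k (\<lambda>m. lift n k L x \<sigma> f m - of_int (b m))
      = spread k (\<lambda>p. lift n k L x \<sigma> f (\<sigma> p) - of_int (b (\<sigma> p)))"
    by (rule spread_permute[OF assms(1), symmetric])
  also have "\<dots> = spread k (\<lambda>p. tail_sum (\<lambda>i. f (vertex n L x \<sigma> i)) k p - of_int (b (\<sigma> p)))"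
    by (rule spread_cong) (simp add: lift_permute[OF assms(1)])
  finally have "spread k (\<lambda>p. tail_sum (\<lambda>i. f (vertex n L x \<sigma> i)) k p - of_int (b (\<sigma> p))) < 1"
    using assms(3) by simp
  from w.step_if_spread_tail_sum_lt_1[OF this]
  obtain j r where j: "j < k" and r: "\<And>p. p < k \<Longrightarrow> b (\<sigma> p) = of_bool (p < j) + r"
    by blast
  have "b m = prefix_indicator \<sigma> j m + r" if "m < k" for m
  proof -
    have "inv \<sigma> m < k" "\<sigma> (inv \<sigma> m) = m"
      using permutes_in_image[OF permutes_inv[OF assms(1)]] permutes_inverses(1)[OF assms(1)] that
      by auto
    then show ?thesis
      using r[of "inv \<sigma> m"] prefix_indicator_permute[OF assms(1), of j "inv \<sigma> m"] by simp
  qed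
  then show ?thesis
    using that j by blast
qed

lemma lift_diff_if_torus_map_eq:
  assumes "torus_map n k L x \<sigma> f = torus_map n k L x' \<sigma>' g"
  obtains z :: "nat \<Rightarrow> int" and D where
    "\<And>m. m < k \<Longrightarrow> lift n k L x \<sigma> f m = lift n k L x' \<sigma>' g m + of_int (z m) + D"
    "(\<Sum>m<k. int (L m) * z m) = int x' - int x"
proof -
  have "\<exists>z::int. m < k \<longrightarrow> normalized_lift n k L x \<sigma> f m - normalized_lift n k L x' \<sigma>' g m = z" for m
    using fun_cong[OF assms, of m] cis_2pi_eq_imp_diff_int unfolding torus_map_def by (metis (full_types))
  then obtain z :: "nat \<Rightarrow> int" where
    z: "\<And>m. m < k \<Longrightarrow> normalized_lift n k L x \<sigma> f m - normalized_lift n k L x' \<sigma>' g m = z m"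
    by metis
  define D where "D = ((\<Sum>m<k. real (L m) * lift n k L x \<sigma> f m) + real x) / real n
     - ((\<Sum>m<k. real (L m) * lift n k L x' \<sigma>' g m) + real x') / real n"
  have "lift n k L x \<sigma> f m = lift n k L x' \<sigma>' g m + of_int (z m) + D" if "m < k" for m
    using z[OF that] unfolding normalized_lift_def D_def by simp
  moreover have "(\<Sum>m<k. real (L m) * of_int (z m))
      = (\<Sum>m<k. real (L m) * normalized_lift n k L x \<sigma> f m - real (L m) * normalized_lift n k L x' \<sigma>' g m)"
    by (intro sum.cong refl) (simp add: z[symmetric] right_diff_distrib)
  then have "real_of_int (\<Sum>m<k. int (L m) * z m) = real_of_int (int x' - int x)"
    by (simp add: sum_subtractf sum_L_normalized_lift)
  then have "(\<Sum>m<k. int (L m) * z m) = int x' - int x"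
    by (simp only: of_int_eq_iff)
  ultimately show ?thesis
    using that by blast
qed

lemma vertex_eq_if_lift_shift:
  assumes \<sigma>: "\<sigma> permutes {..<k}" and \<sigma>': "\<sigma>' permutes {..<k}" and "j < k" "i' < k"
    and Lz: "(\<Sum>m<k. int (L m) * z m) = int x' - int x"
    and shift: "\<And>m. m < k \<Longrightarrow> z m + prefix_indicator \<sigma>' i' m = prefix_indicator \<sigma> j m + r"
  shows "vertex n L x \<sigma> j = vertex n L x' \<sigma>' i'"
proof -
  have "int (prefix_sum L \<sigma> j) + (\<Sum>m<k. int (L m)) * r
      = (\<Sum>m<k. int (L m) * prefix_indicator \<sigma> j m + int (L m) * r)"
    using sum_L_prefix_indicator[OF \<sigma>] assms(3) by (simp add: sum.distrib sum_distrib_right)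
  also have "\<dots> = (\<Sum>m<k. int (L m) * (z m + prefix_indicator \<sigma>' i' m))"
    using shift by (intro sum.cong refl) (simp add: distrib_left)
  also have "\<dots> = int x' - int x + int (prefix_sum L \<sigma>' i')"
    using Lz sum_L_prefix_indicator[OF \<sigma>'] assms(4) by (simp add: distrib_left sum.distrib)
  finally have "(int x + int (prefix_sum L \<sigma> j)) - (int x' + int (prefix_sum L \<sigma>' i')) = int n * (- r)"
    using sum_L by (simp add: algebra_simps flip: of_nat_sum)
  then show ?thesis
    unfolding vertex_eq_iff_dvd by (metis dvd_triv_left)
qed

text \<open>A torus point determines the weights: the spread of the lift minus the lift of a vertex
  is one minus the weight of that vertex, and a spread below one singles out a vertex of the
  cell, which the character relation then identifies with the vertex of the other cell.\<close>
lemma weight_eq_if_torus_map_eq: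
  assumes \<sigma>: "\<sigma> permutes {..<k}" and \<sigma>': "\<sigma>' permutes {..<k}"
    and f: "f \<in> realized_simplex n k L x \<sigma>" and g: "g \<in> realized_simplex n k L x' \<sigma>'"
    and eq: "torus_map n k L x \<sigma> f = torus_map n k L x' \<sigma>' g" and gv: "0 < g v"
  shows "f v = g v"
proof -
  obtain i' where i': "i' < k" "v = vertex n L x' \<sigma>' i'"
    using g gv by (force simp: realized_simplex_def tonnetz_simplex_eq)
  obtain z D where D: "\<And>m. m < k \<Longrightarrow> lift n k L x \<sigma> f m = lift n k L x' \<sigma>' g m + of_int (z m) + D"
    and Lz: "(\<Sum>m<k. int (L m) * z m) = int x' - int x"
    using lift_diff_if_torus_map_eq[OF eq] by blast
  define b where "b m = z m + prefix_indicator \<sigma>' i' m" for m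
  have "spread k (\<lambda>m. lift n k L x \<sigma> f m - of_int (b m))
      = spread k (\<lambda>m. (lift n k L x' \<sigma>' g m - of_int (prefix_indicator \<sigma>' i' m)) + D)"
    by (rule spread_cong) (simp add: D b_def)
  also have "\<dots> = 1 - g v"
    using spread_lift_vertex[OF \<sigma>' g i'(1)] i'(2) by (simp add: spread_add_const)
  finally have spread_b: "spread k (\<lambda>m. lift n k L x \<sigma> f m - of_int (b m)) = 1 - g v" .
  then have "spread k (\<lambda>m. lift n k L x \<sigma> f m - of_int (b m)) < 1"
    using gv by simp
  then obtain j r where j: "j < k" and r: "\<And>m. m < k \<Longrightarrow> b m = prefix_indicator \<sigma> j m + r"
    using vertex_if_spread_lift_lt_1[OF \<sigma> f] by blast
  have "spread k (\<lambda>m. lift n k L x \<sigma> f m - of_int (b m))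
      = spread k (\<lambda>m. (lift n k L x \<sigma> f m - of_int (prefix_indicator \<sigma> j m)) + (- of_int r))"
    by (rule spread_cong) (simp add: r)
  also have "\<dots> = 1 - f (vertex n L x \<sigma> j)"
    using spread_lift_vertex[OF \<sigma> f j] by (simp only: spread_add_const)
  finally have "f (vertex n L x \<sigma> j) = g v"
    using spread_b by simp
  moreover have "vertex n L x \<sigma> j = vertex n L x' \<sigma>' i'"
    using vertex_eq_if_lift_shift[OF \<sigma> \<sigma>' j i'(1) Lz] r by (simp add: b_def)
  ultimately show ?thesis
    using i'(2) by simp
qed

lemma torus_map_injective:
  assumes "\<sigma> permutes {..<k}" "\<sigma>' permutes {..<k}"
    and "f \<in> realized_simplex n k L x \<sigma>" "g \<in> realized_simplex n k L x' \<sigma>'"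
    and "torus_map n k L x \<sigma> f = torus_map n k L x' \<sigma>' g"
  shows "f = g"
proof
  fix v
  have "0 \<le> f v" "0 \<le> g v"
    using assms(3,4) by (auto simp: realized_simplex_def)
  then consider "0 < g v" | "0 < f v" | "f v = 0" "g v = 0"
    by fastforce
  then show "f v = g v"
  proof cases
    case 1
    then show ?thesis
      by (rule weight_eq_if_torus_map_eq[OF assms])
  next
    case 2
    then show ?thesis
      using weight_eq_if_torus_map_eq[OF assms(2,1,4,3) assms(5)[symmetric]] by simp
  qed simp
qed

subsection \<open>Agreement on common faces\<close>

lemma generic_sum_eq_imp_eq: "X \<subseteq> {..<k} \<Longrightarrow> Y \<subseteq> {..<k} \<Longrightarrow> sum L X = sum L Y \<Longrightarrow> X = Y"
  using generic unfolding generic_def by blast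

lemma sum_L_le: "X \<subseteq> {..<k} \<Longrightarrow> sum L X \<le> n"
  using sum_mono2[of "{..<k}" X L] sum_L by simp

lemma generic_congruent_subsets:
  assumes X: "X \<subseteq> {..<k}" and Y: "Y \<subseteq> {..<k}" and dvd: "int n dvd int (sum L X) - int (sum L Y)"
  obtains \<kappa> :: int where "\<And>m. m < k \<Longrightarrow> of_bool (m \<in> X) - of_bool (m \<in> Y) = \<kappa>"
proof -
  consider "sum L X = sum L Y" | "sum L X = n" "sum L Y = 0" | "sum L X = 0" "sum L Y = n"
    using dvd_diff_bounded_cases[OF dvd sum_L_le[OF X] sum_L_le[OF Y]] by meson
  then show ?thesis
  proof cases
    case 1
    then show ?thesis
      using that[of 0] generic_sum_eq_imp_eq[OF X Y] by simp
  next
    case 2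
    then have "X = {..<k}" "Y = {}"
      using generic_sum_eq_imp_eq[OF X, of "{..<k}"] generic_sum_eq_imp_eq[OF Y, of "{}"] sum_L by auto
    then show ?thesis
      using that[of 1] by simp
  next
    case 3
    then have "X = {}" "Y = {..<k}"
      using generic_sum_eq_imp_eq[OF X, of "{}"] generic_sum_eq_imp_eq[OF Y, of "{..<k}"] sum_L by auto
    then show ?thesis
      using that[of "-1"] by simp
  qed
qed

lemma prefix_segment:
  assumes "\<sigma> permutes {..<k}" "i0 \<le> i"
  shows "prefix_indicator \<sigma> i m - prefix_indicator \<sigma> i0 m = of_bool (m \<in> \<sigma> ` {i0..<i})"
    and "prefix_sum L \<sigma> i = prefix_sum L \<sigma> i0 + sum L (\<sigma> ` {i0..<i})"
proof -
  have inj: "inj \<sigma>"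
    using permutes_inj[OF assms(1)] .
  have "{..<i} = {..<i0} \<union> {i0..<i}" "{..<i0} \<inter> {i0..<i} = {}"
    using assms(2) by auto
  then have "\<sigma> ` {..<i} = \<sigma> ` {..<i0} \<union> \<sigma> ` {i0..<i}" "\<sigma> ` {..<i0} \<inter> \<sigma> ` {i0..<i} = {}"
    using inj by (auto simp: image_Int[symmetric])
  then show "prefix_indicator \<sigma> i m - prefix_indicator \<sigma> i0 m = of_bool (m \<in> \<sigma> ` {i0..<i})"
    unfolding prefix_indicator_def by auto
  show "prefix_sum L \<sigma> i = prefix_sum L \<sigma> i0 + sum L (\<sigma> ` {i0..<i})"
    using prefix_sum_split[OF assms(2)] inj by (simp add: sum.reindex inj_on_subset[OF inj])
qed

lemma prefix_indicator_diff:
  assumes "\<sigma> permutes {..<k}" "i < k" "i0 < k"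
  obtains X c where "X \<subseteq> {..<k}"
    "\<And>m. m < k \<Longrightarrow> prefix_indicator \<sigma> i m - prefix_indicator \<sigma> i0 m = of_bool (m \<in> X) + c"
    "int n dvd int (sum L X) - (int (prefix_sum L \<sigma> i) - int (prefix_sum L \<sigma> i0))"
proof (cases "i0 \<le> i")
  case True
  have "\<sigma> ` {i0..<i} \<subseteq> {..<k}"
    using image_mono[of "{i0..<i}" "{..<k}" \<sigma>] permutes_image[OF assms(1)] assms(2) by auto
  then show ?thesis
    using that[of "\<sigma> ` {i0..<i}" 0] prefix_segment[OF assms(1) True] by simp
next
  case False
  let ?S = "\<sigma> ` {i..<i0}"
  have S: "?S \<subseteq> {..<k}"
    using image_mono[of "{i..<i0}" "{..<k}" \<sigma>] permutes_image[OF assms(1)] assms(3) by auto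
  have "sum L ({..<k} - ?S) = n - sum L ?S"
    using sum_diff_nat[OF finite_subset[OF S] S, of L] sum_L by simp
  moreover have "sum L ?S \<le> n"
    using sum_L_le[OF S] .
  ultimately have "int (sum L ({..<k} - ?S)) - (int (prefix_sum L \<sigma> i) - int (prefix_sum L \<sigma> i0)) = int n"
    using prefix_segment(2)[OF assms(1), of i i0] False by simp
  then have "int n dvd int (sum L ({..<k} - ?S)) - (int (prefix_sum L \<sigma> i) - int (prefix_sum L \<sigma> i0))"
    by simp
  moreover have "prefix_indicator \<sigma> i m - prefix_indicator \<sigma> i0 m = of_bool (m \<in> {..<k} - ?S) + (- 1)"
    if "m < k" for m
    using prefix_segment(1)[OF assms(1), of i i0 m] False that by (cases "m \<in> ?S") simp_all
  ultimately show ?thesis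
    using that[of "{..<k} - ?S" "- 1"] by blast
qed

text \<open>Genericity enters here: two vertices shared by two cells are joined by lifted edges that
  agree up to the diagonal.\<close>
lemma prefix_indicator_diff_const:
  assumes \<sigma>: "\<sigma> permutes {..<k}" and \<sigma>': "\<sigma>' permutes {..<k}"
    and ik: "i < k" "i0 < k" "i' < k" "i0' < k"
    and v: "vertex n L x \<sigma> i = vertex n L x' \<sigma>' i'"
    and v0: "vertex n L x \<sigma> i0 = vertex n L x' \<sigma>' i0'"
  shows "\<exists>\<kappa>. \<forall>m<k. prefix_indicator \<sigma> i m - prefix_indicator \<sigma>' i' m
      = prefix_indicator \<sigma> i0 m - prefix_indicator \<sigma>' i0' m + \<kappa>"
proof -
  obtain X c where X: "X \<subseteq> {..<k}"
    "\<And>m. m < k \<Longrightarrow> prefix_indicator \<sigma> i m - prefix_indicator \<sigma> i0 m = of_bool (m \<in> X) + c"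
    "int n dvd int (sum L X) - (int (prefix_sum L \<sigma> i) - int (prefix_sum L \<sigma> i0))"
    using prefix_indicator_diff[OF \<sigma> ik(1,2)] by blast
  obtain Y c' where Y: "Y \<subseteq> {..<k}"
    "\<And>m. m < k \<Longrightarrow> prefix_indicator \<sigma>' i' m - prefix_indicator \<sigma>' i0' m = of_bool (m \<in> Y) + c'"
    "int n dvd int (sum L Y) - (int (prefix_sum L \<sigma>' i') - int (prefix_sum L \<sigma>' i0'))"
    using prefix_indicator_diff[OF \<sigma>' ik(3,4)] by blast
  from dvd_diff[OF vertex_eq_iff_dvd[THEN iffD1, OF v] vertex_eq_iff_dvd[THEN iffD1, OF v0]] have diff:
    "int n dvd (int (prefix_sum L \<sigma> i) - int (prefix_sum L \<sigma> i0))
       - (int (prefix_sum L \<sigma>' i') - int (prefix_sum L \<sigma>' i0'))"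
    by (simp add: algebra_simps)
  have "int n dvd int (sum L X) - int (sum L Y)"
    using dvd_add[OF dvd_add[OF X(3) diff] dvd_minus_iff[THEN iffD2, OF Y(3)]]
    by (simp add: algebra_simps)
  then obtain \<kappa> :: int where \<kappa>: "\<And>m. m < k \<Longrightarrow> of_bool (m \<in> X) - of_bool (m \<in> Y) = \<kappa>"
    using generic_congruent_subsets[OF X(1) Y(1)] by blast
  have "prefix_indicator \<sigma> i m - prefix_indicator \<sigma>' i' m
      = prefix_indicator \<sigma> i0 m - prefix_indicator \<sigma>' i0' m + (\<kappa> + c - c')" if "m < k" for m
    using X(2)[OF that] Y(2)[OF that] \<kappa>[OF that] by simp
  then show ?thesis
    by blast
qed

lemma torus_map_eq_if_lift_diff:
  assumes lift: "\<And>m. m < k \<Longrightarrow> lift n k L x \<sigma> f m - lift n k L x' \<sigma>' g m = of_int (c m) + K"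
    and dvd: "int n dvd (\<Sum>m<k. int (L m) * c m) + int x - int x'"
  shows "torus_map n k L x \<sigma> f = torus_map n k L x' \<sigma>' g"
proof
  fix m
  obtain w where w: "(\<Sum>m<k. int (L m) * c m) + int x - int x' = int n * w"
    using dvd by (elim dvdE)
  have "(\<Sum>m<k. real (L m) * lift n k L x \<sigma> f m) - (\<Sum>m<k. real (L m) * lift n k L x' \<sigma>' g m)
      = (\<Sum>m<k. real (L m) * of_int (c m) + real (L m) * K)"
    unfolding sum_subtractf[symmetric] using lift
    by (intro sum.cong refl) (simp add: right_diff_distrib[symmetric] distrib_left)
  also have "\<dots> = real n * of_int w - real x + real x' + real n * K"
    using arg_cong[OF w, of real_of_int] by (simp add: sum.distrib sum_L_real flip: sum_distrib_right)
  finally have "normalized_lift n k L x \<sigma> f m = normalized_lift n k L x' \<sigma>' g m + of_int (c m - w)"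
    if "m < k"
    using lift[OF that] n_pos unfolding normalized_lift_def by (simp add: field_simps)
  then show "torus_map n k L x \<sigma> f m = torus_map n k L x' \<sigma>' g m"
    unfolding torus_map_def by (simp add: distrib_left cis_mult[symmetric])
qed

lemma lift_eq_sum_support:
  assumes \<sigma>: "\<sigma> permutes {..<k}" and f: "f \<in> realized_simplex n k L x \<sigma>"
  shows "lift n k L x \<sigma> f m
    = (\<Sum>v | 0 < f v. f v * of_int (prefix_indicator \<sigma> (vertex_index n k L x \<sigma> v) m))"
proof -
  let ?idx = "vertex_index n k L x \<sigma>"
  let ?S = "vertex n L x \<sigma> ` {..<k}"
  have f0: "f v = 0" if "v \<notin> ?S" for v
    using f that by (simp add: realized_simplex_def tonnetz_simplex_eq)
  have "lift n k L x \<sigma> f m = (\<Sum>v\<in>?S. f v * of_int (prefix_indicator \<sigma> (?idx v) m))"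
    unfolding lift_def vertex_index_def using inj_on_vertex[OF \<sigma>]
    by (simp add: sum.reindex inv_into_f_f)
  also have "\<dots> = (\<Sum>v | 0 < f v. f v * of_int (prefix_indicator \<sigma> (?idx v) m))"
  proof (rule sum.mono_neutral_cong_right)
    show "{v. 0 < f v} \<subseteq> ?S"
      using f0 by force
    have "0 \<le> f v" for v
      using f by (simp add: realized_simplex_def)
    then show "\<forall>v\<in>?S - {v. 0 < f v}. f v * of_int (prefix_indicator \<sigma> (?idx v) m) = 0"
      by (metis DiffD2 mem_Collect_eq mult_eq_0_iff order.order_iff_strict)
  qed auto
  finally show ?thesis .
qed

lemma vertex_index_support:
  assumes "f \<in> realized_simplex n k L x \<sigma>" "0 < f v"
  shows "vertex_index n k L x \<sigma> v < k" "vertex n L x \<sigma> (vertex_index n k L x \<sigma> v) = v"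
proof -
  have "v \<in> vertex n L x \<sigma> ` {..<k}"
    using assms by (force simp: realized_simplex_def tonnetz_simplex_eq)
  then show "vertex_index n k L x \<sigma> v < k" "vertex n L x \<sigma> (vertex_index n k L x \<sigma> v) = v"
    unfolding vertex_index_def using inv_into_into f_inv_into_f by (metis lessThan_iff)+
qed

lemma sum_support_eq_1:
  assumes "f \<in> realized_simplex n k L x \<sigma>"
  shows "sum f {v. 0 < f v} = 1"
proof -
  have "sum f {v. 0 < f v} = sum f (tonnetz_simplex n k L x \<sigma>)"
    using assms finite_tonnetz_simplex
    by (intro sum.mono_neutral_left) (auto simp: realized_simplex_def order.order_iff_strict)
  then show ?thesis
    using assms by (simp add: realized_simplex_def)
qed

lemma prefix_indicator_diff_on_support:
  assumes \<sigma>: "\<sigma> permutes {..<k}" and \<sigma>': "\<sigma>' permutes {..<k}"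
    and f: "f \<in> realized_simplex n k L x \<sigma>" and f': "f \<in> realized_simplex n k L x' \<sigma>'"
  obtains c \<kappa> where
    "\<And>v m. 0 < f v \<Longrightarrow> m < k \<Longrightarrow> prefix_indicator \<sigma> (vertex_index n k L x \<sigma> v) m
      - prefix_indicator \<sigma>' (vertex_index n k L x' \<sigma>' v) m = c m + \<kappa> v"
    "int n dvd (\<Sum>m<k. int (L m) * c m) + int x - int x'"
proof -
  let ?i = "vertex_index n k L x \<sigma>" and ?i' = "vertex_index n k L x' \<sigma>'"
  note V = vertex_index_support[OF f] vertex_index_support[OF f']
  have "{v. 0 < f v} \<noteq> {}"
    using sum_support_eq_1[OF f] by (metis sum.empty zero_neq_one)
  then obtain v0 where v0: "0 < f v0"
    by blast
  define c where "c m = prefix_indicator \<sigma> (?i v0) m - prefix_indicator \<sigma>' (?i' v0) m" for m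
  have "\<exists>\<kappa>. \<forall>m<k. prefix_indicator \<sigma> (?i v) m - prefix_indicator \<sigma>' (?i' v) m = c m + \<kappa>"
    if v: "0 < f v" for v
  proof -
    have "vertex n L x \<sigma> (?i v) = vertex n L x' \<sigma>' (?i' v)" "vertex n L x \<sigma> (?i v0) = vertex n L x' \<sigma>' (?i' v0)"
      using V[OF v] V[OF v0] by simp_all
    from prefix_indicator_diff_const[OF \<sigma> \<sigma>' V(1)[OF v] V(1)[OF v0] V(3)[OF v] V(3)[OF v0] this]
    show ?thesis
      unfolding c_def by simp
  qed
  then obtain \<kappa> where "\<And>v m. 0 < f v \<Longrightarrow> m < k
      \<Longrightarrow> prefix_indicator \<sigma> (?i v) m - prefix_indicator \<sigma>' (?i' v) m = c m + \<kappa> v"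
    by metis
  moreover have "int n dvd (\<Sum>m<k. int (L m) * c m) + int x - int x'"
    using vertex_eq_iff_dvd[of x \<sigma> "?i v0" x' \<sigma>' "?i' v0"] V[OF v0]
      sum_L_prefix_indicator[OF \<sigma>, of "?i v0"] sum_L_prefix_indicator[OF \<sigma>', of "?i' v0"]
    by (simp add: c_def right_diff_distrib sum_subtractf algebra_simps)
  ultimately show ?thesis
    using that by blast
qed

lemma torus_map_well_defined:
  assumes \<sigma>: "\<sigma> permutes {..<k}" and \<sigma>': "\<sigma>' permutes {..<k}"
    and f: "f \<in> realized_simplex n k L x \<sigma>" and f': "f \<in> realized_simplex n k L x' \<sigma>'"
  shows "torus_map n k L x \<sigma> f = torus_map n k L x' \<sigma>' f"
proof -
  obtain c \<kappa> where \<kappa>: "\<And>v m. 0 < f v \<Longrightarrow> m < k \<Longrightarrow> prefix_indicator \<sigma> (vertex_index n k L x \<sigma> v) m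
      - prefix_indicator \<sigma>' (vertex_index n k L x' \<sigma>' v) m = c m + \<kappa> v"
    and dvd: "int n dvd (\<Sum>m<k. int (L m) * c m) + int x - int x'"
    using prefix_indicator_diff_on_support[OF assms] by blast
  have "lift n k L x \<sigma> f m - lift n k L x' \<sigma>' f m = of_int (c m) + (\<Sum>v | 0 < f v. f v * of_int (\<kappa> v))"
    if "m < k" for m
  proof -
    have "lift n k L x \<sigma> f m - lift n k L x' \<sigma>' f m
        = (\<Sum>v | 0 < f v. f v * of_int (prefix_indicator \<sigma> (vertex_index n k L x \<sigma> v) m
            - prefix_indicator \<sigma>' (vertex_index n k L x' \<sigma>' v) m))"
      unfolding lift_eq_sum_support[OF \<sigma> f] lift_eq_sum_support[OF \<sigma>' f']
      by (simp add: sum_subtractf right_diff_distrib)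
    also have "\<dots> = (\<Sum>v | 0 < f v. f v * of_int (c m) + f v * of_int (\<kappa> v))"
      using \<kappa> that by (intro sum.cong refl) (simp add: distrib_left)
    finally show ?thesis
      using sum_support_eq_1[OF f] by (simp add: sum.distrib flip: sum_distrib_right)
  qed
  then show ?thesis
    using dvd by (rule torus_map_eq_if_lift_diff)
qed

subsection \<open>Surjectivity\<close>

lemma realized_simplex_with_weights:
  assumes \<sigma>: "\<sigma> permutes {..<k}" and t: "\<And>i. 0 \<le> t i" "(\<Sum>i<k. t i) = 1"
  obtains f where "f \<in> realized_simplex n k L x \<sigma>" "\<And>i. i < k \<Longrightarrow> f (vertex n L x \<sigma> i) = t i"
proof -
  let ?S = "vertex n L x \<sigma> ` {..<k}"
  define f where "f v = (if v \<in> ?S then t (vertex_index n k L x \<sigma> v) else 0)" for v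
  have fv: "f (vertex n L x \<sigma> i) = t i" if "i < k" for i
    using inj_on_vertex[OF \<sigma>] that by (simp add: f_def vertex_index_def)
  have "sum f ?S = 1"
    using fv t(2) by (simp add: sum.reindex[OF inj_on_vertex[OF \<sigma>]])
  then have "f \<in> realized_simplex n k L x \<sigma>"
    using t(1) by (simp add: realized_simplex_def tonnetz_simplex_eq f_def)
  then show ?thesis
    using that fv by blast
qed

text \<open>The weights are the consecutive gaps between the angles sorted along \<open>\<sigma>\<close>.\<close>
lemma realized_simplex_with_lift:
  assumes \<sigma>: "\<sigma> permutes {..<k}"
    and sorted: "\<And>a b. a \<le> b \<Longrightarrow> b < k \<Longrightarrow> \<theta> (\<sigma> b) \<le> \<theta> (\<sigma> a)"
    and range: "\<theta> (\<sigma> 0) - \<theta> (\<sigma> (k - 1)) \<le> 1"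
  obtains f where "f \<in> realized_simplex n k L x \<sigma>"
    "\<And>m. m < k \<Longrightarrow> lift n k L x \<sigma> f m = \<theta> m - \<theta> (\<sigma> (k - 1))"
proof -
  define Q where "Q p = \<theta> (\<sigma> p) - \<theta> (\<sigma> (k - 1))" for p
  define t where "t i = (if i = 0 then 1 - Q 0 else if i < k then Q (i - 1) - Q i else 0)" for i
  have telescope: "(\<Sum>i\<in>{p<..<k}. Q (i - 1) - Q i) = Q p" if "p < k" for p
    using sum_greaterThanLessThan_telescope[OF that, of Q] by (simp add: Q_def)
  have "0 \<le> t i" for i
    using sorted[of "i - 1" i] range unfolding t_def Q_def by auto
  moreover have "(\<Sum>i<k. t i) = 1"
  proof -
    have "{..<k} = insert 0 {0<..<k}"
      using k_pos by auto
    then have "(\<Sum>i<k. t i) = 1 - Q 0 + (\<Sum>i\<in>{0<..<k}. Q (i - 1) - Q i)"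
      by (simp add: t_def)
    then show ?thesis
      using telescope[OF k_pos] by simp
  qed
  ultimately obtain f where f: "f \<in> realized_simplex n k L x \<sigma>"
    and fv: "\<And>i. i < k \<Longrightarrow> f (vertex n L x \<sigma> i) = t i"
    using realized_simplex_with_weights[OF \<sigma>] by blast
  have "lift n k L x \<sigma> f m = \<theta> m - \<theta> (\<sigma> (k - 1))" if "m < k" for m
  proof -
    define p where "p = inv \<sigma> m"
    have p: "p < k" "\<sigma> p = m"
      using permutes_in_image[OF permutes_inv[OF \<sigma>]] permutes_inverses(1)[OF \<sigma>] that
      unfolding p_def by auto
    have "lift n k L x \<sigma> f (\<sigma> p) = (\<Sum>i\<in>{p<..<k}. Q (i - 1) - Q i)"
      unfolding lift_permute[OF \<sigma> p(1)] tail_sum_def by (intro sum.cong refl) (simp add: fv t_def)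
    then show ?thesis
      using telescope[OF p(1)] p by (simp add: Q_def)
  qed
  then show ?thesis
    using that f by blast
qed

lemma torus_map_surjective:
  assumes z: "z \<in> character_kernel k (\<lambda>m. int (L m))"
  obtains x \<sigma> f where "x < n" "\<sigma> permutes {..<k}" "f \<in> realized_simplex n k L x \<sigma>"
    "torus_map n k L x \<sigma> f = z"
proof -
  have zt: "z \<in> torus k"
    using z by (simp add: character_kernel_def)
  obtain \<theta> N where \<theta>: "\<And>m. m < k \<Longrightarrow> 0 \<le> \<theta> m \<and> \<theta> m < 1 \<and> z m = cis (2 * pi * \<theta> m)"
    and N: "(\<Sum>m<k. real (L m) * \<theta> m) = of_int N"
    using character_kernel_angles[OF z] by auto
  obtain \<sigma> where \<sigma>: "\<sigma> permutes {..<k}" and sorted: "\<And>a b. a \<le> b \<Longrightarrow> b < k \<Longrightarrow> \<theta> (\<sigma> b) \<le> \<theta> (\<sigma> a)"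
    using exists_sorting_permutation by blast
  define c where "c = \<theta> (\<sigma> (k - 1))"
  have range: "\<theta> (\<sigma> 0) - \<theta> (\<sigma> (k - 1)) \<le> 1"
    using \<theta>[of "\<sigma> 0"] \<theta>[of "\<sigma> (k - 1)"] permutes_in_image[OF \<sigma>] k_pos by auto
  define x where "x = nat ((- N) mod int n)"
  have x: "int x = (- N) mod int n"
    unfolding x_def using n_pos by simp
  then have "x < n"
    using n_pos by (metis of_nat_less_iff of_nat_0_less_iff pos_mod_bound)
  have "int n dvd N + int x"
    unfolding x by (simp add: mod_0_imp_dvd mod_add_right_eq)
  then obtain W where W: "N + int x = int n * W"
    by (elim dvdE)
  obtain f where f: "f \<in> realized_simplex n k L x \<sigma>"
    and lift: "\<And>m. m < k \<Longrightarrow> lift n k L x \<sigma> f m = \<theta> m - c"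
    using realized_simplex_with_lift[where \<theta> = \<theta> and x = x, OF \<sigma> sorted range] unfolding c_def by blast
  have "normalized_lift n k L x \<sigma> f m = \<theta> m - of_int W" if "m < k" for m
  proof -
    have "(\<Sum>m<k. real (L m) * lift n k L x \<sigma> f m) = of_int N - real n * c"
      using lift N by (simp add: right_diff_distrib sum_subtractf sum_L_real flip: sum_distrib_right)
    also have "\<dots> = real n * (of_int W - c) - real x"
      using arg_cong[OF W, of real_of_int] by (simp add: algebra_simps)
    finally show ?thesis
      using lift[OF that] n_pos unfolding normalized_lift_def by simp
  qed
  then have "torus_map n k L x \<sigma> f = z"
    using \<theta> zt by (auto simp: torus_map_def torus_def fun_eq_iff right_diff_distrib simp flip: cis_divide)
  then show ?thesis
    using that \<open>x < n\<close> \<sigma> f by blast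
qed

lemma geometric_realization_homeomorphic_kernel:
  "geometric_realization (tonnetz n k L) homeomorphic character_kernel k (\<lambda>m. int (L m))"
proof -
  define P where "P = {..<n} \<times> {\<sigma>. \<sigma> permutes {..<k}}"
  define C where "C p = realized_simplex n k L (fst p) (snd p)" for p
  define \<phi> where "\<phi> p = torus_map n k L (fst p) (snd p)" for p
  have P: "fst p < n" "snd p permutes {..<k}" if "p \<in> P" for p
    using that unfolding P_def by auto
  have "(\<Union>p\<in>P. \<phi> p ` C p) = character_kernel k (\<lambda>m. int (L m))"
  proof (intro subset_antisym subsetI)
    show "z \<in> character_kernel k (\<lambda>m. int (L m))" if "z \<in> (\<Union>p\<in>P. \<phi> p ` C p)" for z
      using that torus_map_in_kernel unfolding \<phi>_def by auto
    show "z \<in> (\<Union>p\<in>P. \<phi> p ` C p)" if z: "z \<in> character_kernel k (\<lambda>m. int (L m))" for z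
    proof -
      obtain x \<sigma> f where "x < n" "\<sigma> permutes {..<k}" "f \<in> realized_simplex n k L x \<sigma>"
        "torus_map n k L x \<sigma> f = z"
        using torus_map_surjective[OF z] by blast
      then show ?thesis
        unfolding P_def C_def \<phi>_def by force
    qed
  qed
  moreover have "(\<Union>p\<in>P. C p) homeomorphic (\<Union>p\<in>P. \<phi> p ` C p)"
  proof (rule homeomorphic_glued_cells)
    show "finite P"
      unfolding P_def by (simp add: finite_permutations)
    show "compact (C p)" for p
      unfolding C_def by (rule compact_realized_simplex)
    show "continuous_on (C p) (\<phi> p)" for p
      unfolding \<phi>_def by (rule continuous_on_torus_map)
    show "\<phi> p f = \<phi> q f" if "p \<in> P" "q \<in> P" "f \<in> C p" "f \<in> C q" for p q f
      using torus_map_well_defined[OF P(2)[OF that(1)] P(2)[OF that(2)]] that(3,4)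
      unfolding C_def \<phi>_def by blast
    show "f = g" if "p \<in> P" "q \<in> P" "f \<in> C p" "g \<in> C q" "\<phi> p f = \<phi> q g" for p q f g
      using torus_map_injective[OF P(2)[OF that(1)] P(2)[OF that(2)]] that(3-5)
      unfolding C_def \<phi>_def by blast
  qed
  moreover have "geometric_realization (tonnetz n k L) = (\<Union>p\<in>P. C p)"
    unfolding geometric_realization_tonnetz P_def C_def split_def ..
  ultimately show ?thesis
    by simp
qed

end

theorem theorem1p2:
  fixes n k :: nat and L :: "nat \<Rightarrow> nat"
  assumes "k \<ge> 2"
    and "\<forall>i<k. L i > 0"
    and "(\<Sum>i<k. L i) = n"
    and "generic k L"
    and "reduced k L"
  shows "geometric_realization (tonnetz n k L) homeomorphic torus (k - 1)"
proof -
  interpret generic_tonnetz n k L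
    using assms by unfold_locales auto
  obtain w where "(\<Sum>m<k. int (L m) * w m) = 1"
    using bezout_sum_Gcd[of L k] assms(5) unfolding reduced_def by auto
  then have "character_kernel k (\<lambda>m. int (L m)) homeomorphic torus (k - 1)"
    by (rule character_kernel_homeomorphic_torus)
  then show ?thesis
    using geometric_realization_homeomorphic_kernel homeomorphic_trans by blast
qed

end
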